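(* Let $G$ be a finite simple graph that is $(P_3\cup P_2,K_4)$-free. Let $D_1=\{x\in V(G): \omega(G-N(x))\le 2\}$. If the induced subgraph $G[D_1]$ contains an induced subgraph isomorphic to $P_2\cup P_1$, then $\chi(G)\le 7$.
   Context: $P_n$ is the path on $n$ vertices, $K_4$ the complete graph on $4$ vertices, $\cup$ disjoint union. "Free"/"contains" refer to induced subgraphs. $N(x)$ is the (open) neighborhood of $x$, and $G-N(x)$ is the subgraph induced by $V(G)\setminus N(x)$. $\omega$ denotes clique number and $\chi$ chromatic number. *)

theory Defs
  imports Main
begin

text \<open>A finite simple graph is given by a finite vertex set V and a symmetric,
irreflexive adjacency relation E (only its restriction to V matters).\<close>

definition simple_graph :: "'a set \<Rightarrow> ('a \<Rightarrow> 'a \<Rightarrow> bool) \<Rightarrow> bool" where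
  "simple_graph V E \<longleftrightarrow> finite V \<and> (\<forall>u v. E u v \<longrightarrow> E v u) \<and> (\<forall>v. \<not> E v v)"

definition contains_induced ::
  "'a set \<Rightarrow> ('a \<Rightarrow> 'a \<Rightarrow> bool) \<Rightarrow> 'b set \<Rightarrow> ('b \<Rightarrow> 'b \<Rightarrow> bool) \<Rightarrow> bool" where
  "contains_induced V E VH EH \<longleftrightarrow>
     (\<exists>f. inj_on f VH \<and> f ` VH \<subseteq> V \<and> (\<forall>u\<in>VH. \<forall>v\<in>VH. E (f u) (f v) \<longleftrightarrow> EH u v))"

definition free_of ::
  "'a set \<Rightarrow> ('a \<Rightarrow> 'a \<Rightarrow> bool) \<Rightarrow> 'b set \<Rightarrow> ('b \<Rightarrow> 'b \<Rightarrow> bool) \<Rightarrow> bool" where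
  "free_of V E VH EH \<longleftrightarrow> \<not> contains_induced V E VH EH"

definition P3_P2_V :: "nat set" where "P3_P2_V = {0,1,2,3,4}"
definition P3_P2_E :: "nat \<Rightarrow> nat \<Rightarrow> bool" where
  "P3_P2_E u v \<longleftrightarrow> {u,v} = {0,1} \<or> {u,v} = {1,2} \<or> {u,v} = {3,4}"

definition K4_V :: "nat set" where "K4_V = {0,1,2,3}"
definition K4_E :: "nat \<Rightarrow> nat \<Rightarrow> bool" where "K4_E u v \<longleftrightarrow> u \<noteq> v"

definition P2_P1_V :: "nat set" where "P2_P1_V = {0,1,2}"
definition P2_P1_E :: "nat \<Rightarrow> nat \<Rightarrow> bool" where
  "P2_P1_E u v \<longleftrightarrow> {u,v} = {0,1}"

definition nbhd :: "'a set \<Rightarrow> ('a \<Rightarrow> 'a \<Rightarrow> bool) \<Rightarrow> 'a \<Rightarrow> 'a set" where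
  "nbhd V E x = {y \<in> V. E x y}"

definition is_clique :: "'a set \<Rightarrow> ('a \<Rightarrow> 'a \<Rightarrow> bool) \<Rightarrow> 'a set \<Rightarrow> bool" where
  "is_clique V E S \<longleftrightarrow> S \<subseteq> V \<and> (\<forall>u\<in>S. \<forall>v\<in>S. u \<noteq> v \<longrightarrow> E u v)"

definition clique_number :: "'a set \<Rightarrow> ('a \<Rightarrow> 'a \<Rightarrow> bool) \<Rightarrow> nat" where
  "clique_number V E = Max {card S | S. is_clique V E S}"

definition proper_colouring :: "'a set \<Rightarrow> ('a \<Rightarrow> 'a \<Rightarrow> bool) \<Rightarrow> nat \<Rightarrow> ('a \<Rightarrow> nat) \<Rightarrow> bool" where
  "proper_colouring V E k c \<longleftrightarrow> (\<forall>v\<in>V. c v < k) \<and> (\<forall>u\<in>V. \<forall>v\<in>V. E u v \<longrightarrow> c u \<noteq> c v)"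

definition chromatic_number :: "'a set \<Rightarrow> ('a \<Rightarrow> 'a \<Rightarrow> bool) \<Rightarrow> nat" where
  "chromatic_number V E = (LEAST k. \<exists>c. proper_colouring V E k c)"

end

theory Submission
  imports Defs
begin

text \<open>Take an induced copy of P2 + P1 inside D1: an edge ab and a vertex c adjacent to
neither. For x in D1 the graph G - N(x) is triangle-free, so N(y) - N(x) is independent
whenever y is not adjacent to x; K4-freeness makes the common neighbourhood of a and b
independent. Hence N(a) \<inter> N(b), N(a) - N(c), N(b) - N(c), N(c) - N(a) and N(c) - N(b)
are five independent sets covering N(a) \<union> N(b) \<union> N(c). Among the remaining vertices, one
with two neighbours would give a triangle in G - N(a) or, together with the edge ab, an
induced P3 + P2; so they induce a matching, which needs two more colours.\<close>

definition independent_set :: "('a \<Rightarrow> 'a \<Rightarrow> bool) \<Rightarrow> 'a set \<Rightarrow> bool" where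
  "independent_set E S \<longleftrightarrow> (\<forall>u\<in>S. \<forall>v\<in>S. \<not> E u v)"

definition colourable :: "'a set \<Rightarrow> ('a \<Rightarrow> 'a \<Rightarrow> bool) \<Rightarrow> nat \<Rightarrow> bool" where
  "colourable V E k \<longleftrightarrow> (\<exists>c. proper_colouring V E k c)"

lemma chromatic_number_le:
  assumes "colourable V E k"
  shows "chromatic_number V E \<le> k"
  using assms unfolding colourable_def chromatic_number_def by (blast intro: Least_le)

lemma colourable_subset:
  assumes "colourable B E k" "A \<subseteq> B"
  shows "colourable A E k"
  using assms unfolding colourable_def proper_colouring_def by blast

lemma colourable_Un:
  assumes A: "colourable A E k" and B: "colourable B E l"
  shows "colourable (A \<union> B) E (k + l)"
proof -
  obtain cA cB where cA: "proper_colouring A E k cA" and cB: "proper_colouring B E l cB"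
    using A B unfolding colourable_def by blast
  have cA_lt: "\<And>v. v \<in> A \<Longrightarrow> cA v < k"
    and cA_ne: "\<And>u v. u \<in> A \<Longrightarrow> v \<in> A \<Longrightarrow> E u v \<Longrightarrow> cA u \<noteq> cA v"
    using cA unfolding proper_colouring_def by blast+
  have cB_lt: "\<And>v. v \<in> B \<Longrightarrow> cB v < l"
    and cB_ne: "\<And>u v. u \<in> B \<Longrightarrow> v \<in> B \<Longrightarrow> E u v \<Longrightarrow> cB u \<noteq> cB v"
    using cB unfolding proper_colouring_def by blast+
  define c where "c v = (if v \<in> A then cA v else k + cB v)" for v
  have "c v < k + l" if "v \<in> A \<union> B" for v
    using that cA_lt cB_lt unfolding c_def by fastforce
  moreover have "c u \<noteq> c v" if "u \<in> A \<union> B" "v \<in> A \<union> B" "E u v" for u v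
    using that cA_lt[of u] cA_lt[of v] cA_ne[of u v] cB_ne[of u v] unfolding c_def by auto
  ultimately show ?thesis unfolding colourable_def proper_colouring_def by blast
qed

lemma colourable_independent_set:
  assumes "independent_set E S"
  shows "colourable S E 1"
  using assms unfolding colourable_def proper_colouring_def independent_set_def by auto

text \<open>Each endpoint of an edge is coloured by comparing it with its unique neighbour under an
injection into the naturals.\<close>

lemma colourable_2_if_degree_le_1:
  assumes G: "simple_graph S E"
    and deg: "\<And>v w1 w2. \<lbrakk>v \<in> S; w1 \<in> S; w2 \<in> S; E v w1; E v w2\<rbrakk> \<Longrightarrow> w1 = w2"
  shows "colourable S E 2"
proof -
  have sym: "\<And>u v. E u v \<Longrightarrow> E v u" and irr: "\<And>v. \<not> E v v"
    using G by (auto simp: simple_graph_def)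
  obtain g :: "'a \<Rightarrow> nat" where g: "inj_on g S"
    using G finite_imp_inj_to_nat_seg by (metis simple_graph_def)
  define c where "c v = (if \<exists>w\<in>S. E v w \<and> g w < g v then 1 else 0 :: nat)" for v
  have c_edge: "c u = (if g v < g u then 1 else 0)" if uv: "u \<in> S" "v \<in> S" "E u v" for u v
  proof -
    have "(\<exists>w\<in>S. E u w \<and> g w < g u) \<longleftrightarrow> g v < g u"
      using deg[of u _ v] uv by blast
    then show ?thesis unfolding c_def by simp
  qed
  have "c u \<noteq> c v" if "u \<in> S" "v \<in> S" "E u v" for u v
  proof -
    have "g u \<noteq> g v"
      using g that irr by (metis inj_onD)
    then show ?thesis using c_edge[OF that] c_edge[of v u] that sym by auto
  qed
  moreover have "c v < 2" for v by (simp add: c_def)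
  ultimately show ?thesis unfolding colourable_def proper_colouring_def by blast
qed

lemma clique_card_le_clique_number:
  assumes "finite W" "is_clique W E S"
  shows "card S \<le> clique_number W E"
  unfolding clique_number_def
proof (rule Max_ge)
  have "{card S |S. is_clique W E S} \<subseteq> card ` Pow W"
    by (auto simp: is_clique_def)
  then show "finite {card S |S. is_clique W E S}"
    using assms(1) by (meson finite_Pow_iff finite_imageI finite_subset)
  show "card S \<in> {card S |S. is_clique W E S}" using assms(2) by blast
qed

lemma clique_number_ge_3_if_triangle:
  assumes "simple_graph V E" "W \<subseteq> V" "u \<in> W" "v \<in> W" "w \<in> W"
    and "E u v" "E v w" "E u w"
  shows "3 \<le> clique_number W E"
proof -
  have "finite W" and sym: "\<And>s t. E s t \<Longrightarrow> E t s" and irr: "\<And>s. \<not> E s s"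
    using assms(1,2) finite_subset by (auto simp: simple_graph_def)
  have "is_clique W E {u, v, w}"
    using assms(3-8) sym unfolding is_clique_def by auto
  then have "card {u, v, w} \<le> clique_number W E"
    by (rule clique_card_le_clique_number[OF \<open>finite W\<close>])
  moreover have "card {u, v, w} = 3"
    using assms(6-8) irr by (metis card_3_iff)
  ultimately show ?thesis by simp
qed

lemma independent_nbhd_diff_nbhd:
  assumes "simple_graph V E" "clique_number (V - nbhd V E x) E \<le> 2"
    and "y \<in> V" "\<not> E x y"
  shows "independent_set E (nbhd V E y - nbhd V E x)"
  unfolding independent_set_def
proof (intro ballI notI)
  fix u v assume "u \<in> nbhd V E y - nbhd V E x" "v \<in> nbhd V E y - nbhd V E x" "E u v"
  then have "3 \<le> clique_number (V - nbhd V E x) E"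
    using assms(1,3,4)
    by (intro clique_number_ge_3_if_triangle[of V E _ y u v]) (auto simp: nbhd_def)
  then show False using assms(2) by simp
qed

lemma contains_induced_K4I:
  assumes "simple_graph V E" "a \<in> V" "b \<in> V" "u \<in> V" "v \<in> V"
    and "E a b" "E a u" "E a v" "E b u" "E b v" "E u v"
  shows "contains_induced V E K4_V K4_E"
proof -
  have sym: "\<And>s t. E s t \<Longrightarrow> E t s" and irr: "\<And>s. \<not> E s s"
    using assms(1) by (auto simp: simple_graph_def)
  define f where "f i = [a, b, u, v] ! i" for i :: nat
  have "inj_on f K4_V" using assms(6-11) irr unfolding inj_on_def K4_V_def f_def by auto
  moreover have "f ` K4_V \<subseteq> V" using assms(2-5) unfolding K4_V_def f_def by auto
  moreover have "\<forall>i\<in>K4_V. \<forall>j\<in>K4_V. E (f i) (f j) \<longleftrightarrow> K4_E i j"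
    using assms(6-11) sym irr unfolding K4_V_def K4_E_def f_def by auto
  ultimately show ?thesis unfolding contains_induced_def by blast
qed

lemma contains_induced_P3_P2I:
  assumes "simple_graph V E" "p \<in> V" "q \<in> V" "r \<in> V" "a \<in> V" "b \<in> V"
    and "E p q" "E q r" "\<not> E p r" "p \<noteq> r" "E a b"
    and "\<forall>s\<in>{p, q, r}. \<not> E s a \<and> \<not> E s b"
  shows "contains_induced V E P3_P2_V P3_P2_E"
proof -
  have sym: "\<And>s t. E s t \<Longrightarrow> E t s" and irr: "\<And>s. \<not> E s s"
    using assms(1) by (auto simp: simple_graph_def)
  have ne: "p \<noteq> a" "p \<noteq> b" "q \<noteq> a" "q \<noteq> b" "r \<noteq> a" "r \<noteq> b"
    using assms(7,8,11,12) sym by auto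
  define f where "f i = [p, q, r, a, b] ! i" for i :: nat
  have "inj_on f P3_P2_V"
    using assms(7-12) irr ne unfolding inj_on_def P3_P2_V_def f_def by auto
  moreover have "f ` P3_P2_V \<subseteq> V" using assms(2-6) unfolding P3_P2_V_def f_def by auto
  moreover have "\<forall>i\<in>P3_P2_V. \<forall>j\<in>P3_P2_V. E (f i) (f j) \<longleftrightarrow> P3_P2_E i j"
    using assms(7-12) sym irr unfolding P3_P2_V_def P3_P2_E_def f_def
    by (auto simp: doubleton_eq_iff)
  ultimately show ?thesis unfolding contains_induced_def by blast
qed

lemma contains_induced_P2_P1E:
  assumes "contains_induced W E P2_P1_V P2_P1_E"
  obtains a b c where "a \<in> W" "b \<in> W" "c \<in> W" "E a b" "\<not> E a c" "\<not> E b c"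
proof -
  obtain f where "f ` P2_P1_V \<subseteq> W" "\<forall>u\<in>P2_P1_V. \<forall>v\<in>P2_P1_V. E (f u) (f v) \<longleftrightarrow> P2_P1_E u v"
    using assms unfolding contains_induced_def by blast
  then show ?thesis
    using that[of "f 0" "f 1" "f 2"] unfolding P2_P1_V_def P2_P1_E_def
    by (simp add: doubleton_eq_iff)
qed

lemma independent_common_nbhd:
  assumes "simple_graph V E" "free_of V E K4_V K4_E" "a \<in> V" "b \<in> V" "E a b"
  shows "independent_set E (nbhd V E a \<inter> nbhd V E b)"
  using assms contains_induced_K4I[OF assms(1)]
  unfolding independent_set_def free_of_def nbhd_def by blast

lemma degree_le_1_outside_nbhds:
  assumes G: "simple_graph V E" and "free_of V E P3_P2_V P3_P2_E"
    and "clique_number (V - nbhd V E a) E \<le> 2"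
    and "a \<in> V" "b \<in> V" "E a b"
    and outside: "{v, w1, w2} \<subseteq> V - (nbhd V E a \<union> nbhd V E b)"
    and "E v w1" "E v w2"
  shows "w1 = w2"
proof (rule ccontr)
  assume "w1 \<noteq> w2"
  have sym: "\<And>s t. E s t \<Longrightarrow> E t s" using G by (auto simp: simple_graph_def)
  have non_adj: "\<forall>s\<in>{w1, v, w2}. s \<in> V \<and> \<not> E s a \<and> \<not> E s b"
    using outside sym unfolding nbhd_def by auto
  show False
  proof (cases "E w1 w2")
    case True
    then have "3 \<le> clique_number (V - nbhd V E a) E"
      using G non_adj \<open>E v w1\<close> \<open>E v w2\<close> sym
      by (intro clique_number_ge_3_if_triangle[of V E _ v w1 w2]) (auto simp: nbhd_def)
    then show False using assms(3) by simp
  next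
    case False
    then have "contains_induced V E P3_P2_V P3_P2_E"
      using non_adj \<open>w1 \<noteq> w2\<close> \<open>E v w1\<close> \<open>E v w2\<close> sym assms(4-6)
      by (intro contains_induced_P3_P2I[OF G, of w1 v w2 a b]) auto
    then show False using assms(2) by (simp add: free_of_def)
  qed
qed

lemma colourable_2_outside_nbhds:
  assumes G: "simple_graph V E" and "free_of V E P3_P2_V P3_P2_E"
    and "clique_number (V - nbhd V E a) E \<le> 2"
    and "a \<in> V" "b \<in> V" "E a b"
  shows "colourable (V - (nbhd V E a \<union> nbhd V E b)) E 2"
proof (rule colourable_2_if_degree_le_1)
  show "simple_graph (V - (nbhd V E a \<union> nbhd V E b)) E"
    using G by (auto simp: simple_graph_def)
qed (use degree_le_1_outside_nbhds[OF assms] in auto)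

theorem theorem1p1:
  fixes V :: "'a set" and E :: "'a \<Rightarrow> 'a \<Rightarrow> bool"
  assumes "simple_graph V E"
    and "free_of V E P3_P2_V P3_P2_E"
    and "free_of V E K4_V K4_E"
    and "contains_induced {x \<in> V. clique_number (V - nbhd V E x) E \<le> 2} E P2_P1_V P2_P1_E"
  shows "chromatic_number V E \<le> 7"
proof -
  note G = assms(1)
  have sym: "\<And>s t. E s t \<Longrightarrow> E t s" using G by (auto simp: simple_graph_def)
  let ?N = "nbhd V E"
  let ?D1 = "{x \<in> V. clique_number (V - ?N x) E \<le> 2}"
  obtain a b c where abc: "a \<in> ?D1" "b \<in> ?D1" "c \<in> ?D1" "E a b" "\<not> E a c" "\<not> E b c"
    by (rule contains_induced_P2_P1E[OF assms(4)])
  then have "a \<in> V" "b \<in> V" "c \<in> V" and D1: "clique_number (V - ?N a) E \<le> 2"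
    "clique_number (V - ?N b) E \<le> 2" "clique_number (V - ?N c) E \<le> 2"
    by auto
  have common: "colourable (?N a \<inter> ?N b) E 1"
    using independent_common_nbhd[OF G assms(3) \<open>a \<in> V\<close> \<open>b \<in> V\<close> \<open>E a b\<close>]
    by (rule colourable_independent_set)
  have diff: "colourable (?N y - ?N x) E 1"
    if "clique_number (V - ?N x) E \<le> 2" "y \<in> V" "\<not> E x y" for x y
    using independent_nbhd_diff_nbhd[OF G that] by (rule colourable_independent_set)
  have rest: "colourable (V - (?N a \<union> ?N b)) E 2"
    by (rule colourable_2_outside_nbhds[OF G assms(2) D1(1) \<open>a \<in> V\<close> \<open>b \<in> V\<close> \<open>E a b\<close>])
  have "colourable ((?N a \<inter> ?N b) \<union> (?N a - ?N c) \<union> (?N b - ?N c) \<union> (?N c - ?N a)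
      \<union> (?N c - ?N b) \<union> (V - (?N a \<union> ?N b))) E (1 + 1 + 1 + 1 + 1 + 2)"
    using \<open>a \<in> V\<close> \<open>b \<in> V\<close> \<open>c \<in> V\<close> abc(5,6) sym
    by (intro colourable_Un common rest diff D1) auto
  moreover have "V \<subseteq> (?N a \<inter> ?N b) \<union> (?N a - ?N c) \<union> (?N b - ?N c) \<union> (?N c - ?N a)
      \<union> (?N c - ?N b) \<union> (V - (?N a \<union> ?N b))"
    by (auto simp: nbhd_def)
  ultimately have "colourable V E (1 + 1 + 1 + 1 + 1 + 2)" by (rule colourable_subset)
  then have "chromatic_number V E \<le> 1 + 1 + 1 + 1 + 1 + 2" by (rule chromatic_number_le)
  then show ?thesis by simp
qed

end
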